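(* In both the single-hop and the multihop version of Peg Duotaire, for all words $x,y\in\{0,1\}^*$ and every integer $m\ge 0$, the position $x\,0(01)^m00\,y$ is equivalent to the disjunctive sum of the positions $x0$ and $0y$ (the two parts can never interact); in particular \[ G\bigl(x\,0(01)^m00\,y\bigr) = G(x0)\oplus G(0y). \]
   Context: Peg Duotaire is an impartial two-player game played on the infinite line of sites indexed by $\mathbb{Z}$, each site holding a peg or being a hole, with finitely many pegs. A word $w\in\{0,1\}^*$ denotes the position in which $w$ is written on consecutive sites ($1$ = peg, $0$ = hole) and all other sites are holes. A hop: for a peg at site $i$, a peg at site $i+d$ and a hole at site $i+2d$ ($d=\pm1$), move the peg from $i$ to $i+2d$ and remove the peg at $i+d$. In the single-hop version, a move is a single hop; in the multihop version, a move is a sequence of one or more hops all performed by the same peg. Players alternate moves; a player unable to move loses. $G(w)$ denotes the nim-value (Grundy number) of the position $w$: the least nonnegative integer not among the nim-values of positions reachable in one move. $\oplus$ is bitwise exclusive-or of nonnegative integers (nim-sum); the nim-value of a disjunctive sum of games is the nim-sum of their nim-values. *)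

theory Defs
  imports Main
begin

text \<open>A position is the (finite) set of sites in the integers holding a peg.\<close>
type_synonym position = "int set"

text \<open>A word (True = peg, False = hole) written on sites 0,1,...,length w - 1.\<close>
definition word_pos :: "bool list \<Rightarrow> position" where
  "word_pos w = {int i | i. i < length w \<and> w ! i}"

definition hop :: "position \<Rightarrow> int \<Rightarrow> int \<Rightarrow> position \<Rightarrow> bool" where
  "hop P i j Q \<longleftrightarrow> (\<exists>d::int. (d = 1 \<or> d = -1) \<and> i \<in> P \<and> i + d \<in> P \<and> i + 2*d \<notin> P
      \<and> j = i + 2*d \<and> Q = (P - {i, i + d}) \<union> {i + 2*d})"

inductive multihop :: "position \<Rightarrow> int \<Rightarrow> position \<Rightarrow> bool" where
  one: "hop P i j Q \<Longrightarrow> multihop P i Q"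
| more: "hop P i j Q \<Longrightarrow> multihop Q j R \<Longrightarrow> multihop P i R"

datatype version = SingleHop | MultiHop

definition moves :: "version \<Rightarrow> position \<Rightarrow> position set" where
  "moves v P = (case v of
      SingleHop \<Rightarrow> {Q. \<exists>i j. hop P i j Q}
    | MultiHop \<Rightarrow> {Q. \<exists>i. multihop P i Q})"

definition mex :: "nat set \<Rightarrow> nat" where
  "mex S = (LEAST n. n \<notin> S)"

text \<open>Nim-value computed with fuel: every move removes at least one peg, so from a
  finite position P the game lasts at most card P moves; fuel card P suffices.\<close>
fun grundy_fuel :: "version \<Rightarrow> nat \<Rightarrow> position \<Rightarrow> nat" where
  "grundy_fuel v 0 P = 0"
| "grundy_fuel v (Suc n) P = mex (grundy_fuel v n ` moves v P)"

definition grundy :: "version \<Rightarrow> position \<Rightarrow> nat" where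
  "grundy v P = grundy_fuel v (card P) P"

definition G :: "version \<Rightarrow> bool list \<Rightarrow> nat" where
  "G v w = grundy v (word_pos w)"

end

(*
  The pegs of x0 can never pass the hole ending x0, and those of 0y never pass the hole
  starting 0y.  This is Conway's pagoda argument: give a peg at distance d on the near side
  of a target site the weight s^d, where s = (sqrt 5 - 1)/2 satisfies s^2 + s = 1, so that no
  hop increases the total weight.  Pegs strictly before the target weigh less than the
  geometric series s + s^2 + ... = 1/s, whereas a single peg past the target weighs 1/s.
  The pegs of (01)^m are isolated, so they never move, and the two outer parts never come
  next to them.  Every move of the whole position is therefore a move in exactly one part,
  and the Sprague-Grundy value of such a sum is the nim-sum of the values of its parts.
*)
theory Submission
  imports Defs Complex_Main
begin

unbundle bit_operations_syntax

section \<open>Nim-sums and the minimal excludant\<close>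

lemma xor_less_cases:
  fixes a b c :: nat
  assumes "c < a XOR b"
  shows "c XOR b < a \<or> c XOR a < b"
  using assms
proof (induction "a + b" arbitrary: a b c rule: less_induct)
  case less
  define A B C where "A = a div 2" and "B = b div 2" and "C = c div 2"
  have a: "a = a mod 2 + 2 * A" and b: "b = b mod 2 + 2 * B" and c: "c = c mod 2 + 2 * C"
    unfolding A_def B_def C_def by simp_all
  have ab: "a XOR b = of_bool (odd a \<noteq> odd b) + 2 * (A XOR B)"
    and cb: "c XOR b = of_bool (odd c \<noteq> odd b) + 2 * (C XOR B)"
    and ca: "c XOR a = of_bool (odd c \<noteq> odd a) + 2 * (C XOR A)"
    unfolding A_def B_def C_def by (rule xor_nat_rec)+
  show ?case
  proof (cases "C < A XOR B")
    case True
    have "A + B < a + b"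
      using less.prems unfolding A_def B_def by (cases "a + b = 0") auto
    from less.hyps[OF this True] show ?thesis
      using a b cb ca by auto
  next
    case False
    have "c mod 2 + 2 * C < of_bool (odd a \<noteq> odd b) + 2 * (A XOR B)"
      using less.prems ab c by simp
    with False have C: "C = A XOR B" and "even c" "odd a \<noteq> odd b"
      by (cases "odd a = odd b"; auto simp: even_iff_mod_2_eq_zero)+
    then have "C XOR B = A" "C XOR A = B"
      by (simp_all add: xor.assoc) (metis xor.assoc xor.commute xor.right_neutral xor_self_eq)
    with \<open>even c\<close> \<open>odd a \<noteq> odd b\<close> show ?thesis
      using a b cb ca by (cases "odd a") (auto simp: odd_iff_mod_2_eq_one)
  qed
qed

lemma xor_right_cancel_nat [simp]: "((a::nat) XOR c = b XOR c) = (a = b)"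
  by (metis xor.assoc xor.right_neutral xor_self_eq)

lemma xor_left_cancel_nat [simp]: "((c::nat) XOR a = c XOR b) = (a = b)"
  by (metis xor.commute xor_right_cancel_nat)

lemma mex_not_mem: "finite S \<Longrightarrow> mex S \<notin> S"
  unfolding mex_def by (rule LeastI_ex) (use ex_new_if_finite[OF infinite_UNIV_nat] in blast)

lemma mex_le: "n \<notin> S \<Longrightarrow> mex S \<le> n"
  unfolding mex_def by (rule Least_le)

lemma less_mex_mem: "k < mex S \<Longrightarrow> k \<in> S"
  unfolding mex_def using not_less_Least by blast

lemma mex_eqI: "a \<notin> S \<Longrightarrow> (\<And>k. k < a \<Longrightarrow> k \<in> S) \<Longrightarrow> mex S = a"
  unfolding mex_def by (rule Least_equality) (auto simp: not_less[symmetric])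

lemma mex_empty [simp]: "mex {} = 0"
  by (rule mex_eqI) auto

lemma mex_xor:
  assumes "finite S" "finite T"
  shows "mex ((\<lambda>s. s XOR mex T) ` S \<union> (\<lambda>t. mex S XOR t) ` T) = mex S XOR mex T"
proof (rule mex_eqI)
  show "mex S XOR mex T \<notin> (\<lambda>s. s XOR mex T) ` S \<union> (\<lambda>t. mex S XOR t) ` T"
    using mex_not_mem[OF assms(1)] mex_not_mem[OF assms(2)] by auto
next
  fix k assume "k < mex S XOR mex T"
  then consider "k XOR mex T < mex S" | "k XOR mex S < mex T"
    using xor_less_cases by blast
  then show "k \<in> (\<lambda>s. s XOR mex T) ` S \<union> (\<lambda>t. mex S XOR t) ` T"
  proof cases
    case 1
    then have "k XOR mex T \<in> S" by (rule less_mex_mem)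
    then show ?thesis by (auto simp: image_iff xor.assoc intro!: bexI[of _ "k XOR mex T"])
  next
    case 2
    then have "k XOR mex S \<in> T" by (rule less_mex_mem)
    then show ?thesis by (auto simp: image_iff xor.left_commute intro!: bexI[of _ "k XOR mex S"])
  qed
qed

definition hop_step :: "position \<Rightarrow> position \<Rightarrow> bool" where
  "hop_step P Q \<longleftrightarrow> (\<exists>i j. hop P i j Q)"

lemma hop_stepI: "hop P i j Q \<Longrightarrow> hop_step P Q"
  unfolding hop_step_def by blast

lemma hop_mem: "hop P i j Q \<Longrightarrow> i \<in> P \<and> j \<in> Q"
  unfolding hop_def by auto

lemma hop_finite_card:
  assumes "hop P i j Q" "finite P"
  shows "finite Q \<and> card Q < card P"
proof -
  obtain d where d: "d = 1 \<or> d = -1" "i \<in> P" "i + d \<in> P" "i + 2*d \<notin> P"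
    and Q: "Q = insert (i + 2*d) (P - {i, i + d})"
    using assms(1) unfolding hop_def by auto
  have "card (P - {i, i + d}) = card P - 2"
    using d assms(2) by (auto simp: card_Diff_subset)
  moreover have "card {i, i + d} \<le> card P"
    using d assms(2) by (intro card_mono) auto
  ultimately show ?thesis
    using d assms(2) unfolding Q by auto
qed

lemma multihop_start: "multihop P i Q \<Longrightarrow> i \<in> P"
  by (induction rule: multihop.induct) (auto dest: hop_mem)

lemma multihop_tranclp: "multihop P i Q \<Longrightarrow> hop_step\<^sup>+\<^sup>+ P Q"
  by (induction rule: multihop.induct) (auto intro: hop_stepI tranclp_into_tranclp2)

lemma moves_tranclp: "Q \<in> moves v P \<Longrightarrow> hop_step\<^sup>+\<^sup>+ P Q"
  by (cases v) (auto simp: moves_def intro: multihop_tranclp hop_stepI)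

lemma hop_steps_finite_card:
  "hop_step\<^sup>+\<^sup>+ P Q \<Longrightarrow> finite P \<Longrightarrow> finite Q \<and> card Q < card P"
  by (induction rule: tranclp_induct) (auto simp: hop_step_def dest!: hop_finite_card)

lemma moves_finite_card: "Q \<in> moves v P \<Longrightarrow> finite P \<Longrightarrow> finite Q \<and> card Q < card P"
  by (rule hop_steps_finite_card[OF moves_tranclp])

lemma grundy_fuel_enough:
  assumes "finite P" "card P \<le> k"
  shows "grundy_fuel v k P = grundy v P"
  using assms
proof (induction k arbitrary: P rule: less_induct)
  case (less k)
  show ?case
  proof (cases "moves v P = {}")
    case True
    then show ?thesis
      by (cases k; cases "card P") (simp_all add: grundy_def)
  next
    case False
    then have "card P \<noteq> 0"
      using less.prems moves_finite_card by fastforce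
    then obtain l k' where l: "card P = Suc l" and k: "k = Suc k'"
      using less.prems(2) by (metis Suc_le_D not0_implies_Suc)
    have "grundy_fuel v k' Q = grundy_fuel v l Q" if "Q \<in> moves v P" for Q
      using moves_finite_card[OF that \<open>finite P\<close>] less l k by simp
    then show ?thesis
      using l k by (simp add: grundy_def cong: image_cong)
  qed
qed

lemma grundy_eq_mex:
  assumes "finite P"
  shows "grundy v P = mex (grundy v ` moves v P)"
proof -
  have "grundy v P = grundy_fuel v (Suc (card P)) P"
    by (rule grundy_fuel_enough[symmetric]) (use assms in auto)
  also have "\<dots> = mex (grundy_fuel v (card P) ` moves v P)"
    by simp
  also have "grundy_fuel v (card P) ` moves v P = grundy v ` moves v P"
    using grundy_fuel_enough moves_finite_card[OF _ assms] by (simp add: less_imp_le cong: image_cong)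
  finally show ?thesis .
qed

lemma grundy_le_card: "finite P \<Longrightarrow> grundy v P \<le> card P"
proof (induction "card P" arbitrary: P rule: less_induct)
  case less
  have "grundy v Q < card P" if "Q \<in> moves v P" for Q
    using less moves_finite_card[OF that less.prems] by fastforce
  then have "card P \<notin> grundy v ` moves v P"
    by (metis imageE less_irrefl)
  then show ?case
    using grundy_eq_mex[OF less.prems] mex_le by metis
qed

lemma finite_grundy_moves:
  assumes "finite P"
  shows "finite (grundy v ` moves v P)"
proof (rule finite_subset)
  have "grundy v Q < card P" if "Q \<in> moves v P" for Q
    using grundy_le_card moves_finite_card[OF that assms] by (meson le_less_trans)
  then show "grundy v ` moves v P \<subseteq> {..<card P}"
    by auto
qed simp

section \<open>Translation invariance\<close>

definition shift :: "int \<Rightarrow> position \<Rightarrow> position" where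
  "shift t P = (+) t ` P"

lemma shift_shift [simp]: "shift s (shift t P) = shift (s + t) P"
  unfolding shift_def by (auto simp: image_image add.assoc)

lemma shift_0 [simp]: "shift 0 P = P"
  unfolding shift_def by simp

lemma shift_Un [simp]: "shift t (P \<union> Q) = shift t P \<union> shift t Q"
  unfolding shift_def by (rule image_Un)

lemma shift_empty [simp]: "shift t {} = {}"
  unfolding shift_def by simp

lemma shift_insert [simp]: "shift t (insert i P) = insert (t + i) (shift t P)"
  unfolding shift_def by simp

lemma mem_shift_iff: "i \<in> shift t P \<longleftrightarrow> i - t \<in> P"
  unfolding shift_def by force

lemma finite_shift_iff [simp]: "finite (shift t P) \<longleftrightarrow> finite P"
  unfolding shift_def by (simp add: finite_image_iff)

lemma card_shift [simp]: "card (shift t P) = card P"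
  unfolding shift_def by (simp add: card_image)

lemma hop_shift: "hop P i j Q \<Longrightarrow> hop (shift t P) (t + i) (t + j) (shift t Q)"
  unfolding hop_def by (auto simp: mem_shift_iff algebra_simps)

lemma multihop_shift: "multihop P i Q \<Longrightarrow> multihop (shift t P) (t + i) (shift t Q)"
  by (induction rule: multihop.induct) (auto intro: multihop.intros hop_shift)

lemma moves_shift_subset: "shift t ` moves v P \<subseteq> moves v (shift t P)"
  unfolding moves_def by (cases v) (auto intro: hop_shift multihop_shift)

lemma moves_shift: "moves v (shift t P) = shift t ` moves v P"
proof
  have "moves v (shift t P) = shift t ` shift (- t) ` moves v (shift t P)"
    by (simp add: image_image)
  also have "\<dots> \<subseteq> shift t ` moves v P"
    using moves_shift_subset[of "- t" v "shift t P"] by (intro image_mono) simp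
  finally show "moves v (shift t P) \<subseteq> shift t ` moves v P" .
qed (rule moves_shift_subset)

lemma grundy_fuel_shift: "grundy_fuel v k (shift t P) = grundy_fuel v k P"
  by (induction k arbitrary: P) (simp_all add: moves_shift image_image)

lemma grundy_shift [simp]: "grundy v (shift t P) = grundy v P"
  unfolding grundy_def by (simp add: grundy_fuel_shift)

section \<open>Sums of positions that never interact\<close>

definition apart :: "int set \<Rightarrow> int set \<Rightarrow> bool" where
  "apart S T \<longleftrightarrow> (\<forall>i\<in>S. \<forall>k\<in>T. 2 \<le> \<bar>i - k\<bar>)"

definition confined :: "position \<Rightarrow> int set \<Rightarrow> bool" where
  "confined P S \<longleftrightarrow> (\<forall>Q. hop_step\<^sup>*\<^sup>* P Q \<longrightarrow> Q \<subseteq> S)"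

lemma apart_commute: "apart S T \<longleftrightarrow> apart T S"
  unfolding apart_def by (metis abs_minus_commute)

lemma apart_mono: "apart S T \<Longrightarrow> P \<subseteq> S \<Longrightarrow> R \<subseteq> T \<Longrightarrow> apart P R"
  unfolding apart_def by blast

lemma apart_disjoint: "apart S T \<Longrightarrow> S \<inter> T = {}"
  unfolding apart_def by (metis disjoint_iff diff_self abs_zero not_numeral_le_zero)

lemma confined_subset: "confined P S \<Longrightarrow> P \<subseteq> S"
  unfolding confined_def by (meson rtranclp.rtrancl_refl)

lemma confined_rtranclp: "confined P S \<Longrightarrow> hop_step\<^sup>*\<^sup>* P Q \<Longrightarrow> confined Q S"
  unfolding confined_def by (meson rtranclp_trans)

lemma confined_tranclp: "confined P S \<Longrightarrow> hop_step\<^sup>+\<^sup>+ P Q \<Longrightarrow> confined Q S"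
  by (meson confined_rtranclp tranclp_into_rtranclp)

lemma confined_hop: "confined P S \<Longrightarrow> hop P i j Q \<Longrightarrow> confined Q S"
  by (meson confined_rtranclp hop_stepI r_into_rtranclp)

lemma confined_apart:
  "confined P S \<Longrightarrow> confined R T \<Longrightarrow> apart S T \<Longrightarrow> apart P R"
  by (meson apart_mono confined_subset)

lemma hop_Un:
  assumes "hop P i j P'" "P \<inter> R = {}" "P' \<inter> R = {}"
  shows "hop (P \<union> R) i j (P' \<union> R)"
proof -
  obtain d where d: "d = 1 \<or> d = -1" "i \<in> P" "i + d \<in> P" "i + 2*d \<notin> P" "j = i + 2*d"
    and P': "P' = (P - {i, i + d}) \<union> {i + 2*d}"
    using assms(1) unfolding hop_def by blast
  have "i + 2*d \<notin> R"
    using assms(3) P' by blast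
  then show ?thesis
    unfolding hop_def using d P' assms(2) by (intro exI[of _ d]) auto
qed

lemma hop_Un_left:
  assumes "hop (P \<union> R) i j C" "apart P R" "i \<in> P"
  shows "\<exists>P'. hop P i j P' \<and> C = P' \<union> R"
proof -
  obtain d where d: "d = 1 \<or> d = -1" "i + d \<in> P \<union> R" "i + 2*d \<notin> P \<union> R" "j = i + 2*d"
    and C: "C = (P \<union> R - {i, i + d}) \<union> {i + 2*d}"
    using assms(1) unfolding hop_def by blast
  have "i + d \<notin> R"
    using assms(2,3) d(1) unfolding apart_def by force
  with d have "i + d \<in> P" by blast
  have "i \<notin> R"
    using assms(2,3) apart_disjoint by blast
  show ?thesis
  proof (intro exI conjI)
    show "hop P i j (P - {i, i + d} \<union> {i + 2*d})"
      unfolding hop_def using d assms(3) \<open>i + d \<in> P\<close> by blast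
    show "C = (P - {i, i + d} \<union> {i + 2*d}) \<union> R"
      unfolding C using \<open>i \<notin> R\<close> \<open>i + d \<notin> R\<close> by blast
  qed
qed

lemma hop_Un_cases:
  assumes "hop (P \<union> R) i j C" "apart P R"
  shows "(\<exists>P'. hop P i j P' \<and> C = P' \<union> R) \<or> (\<exists>R'. hop R i j R' \<and> C = P \<union> R')"
proof (cases "i \<in> P")
  case True
  then show ?thesis using hop_Un_left[OF assms] by blast
next
  case False
  with hop_mem[OF assms(1)] have "i \<in> R" by blast
  with assms hop_Un_left[of R P i j C] show ?thesis
    by (simp add: Un_commute apart_commute)
qed

lemma rtranclp_hop_step_Un:
  assumes "hop_step\<^sup>*\<^sup>* (P \<union> R) C" "confined P S" "confined R T" "apart S T"
  shows "\<exists>P' R'. hop_step\<^sup>*\<^sup>* P P' \<and> hop_step\<^sup>*\<^sup>* R R' \<and> C = P' \<union> R'"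
  using assms(1)
proof (induction rule: rtranclp_induct)
  case (step C C')
  then obtain P' R' where P': "hop_step\<^sup>*\<^sup>* P P'" and R': "hop_step\<^sup>*\<^sup>* R R'"
    and C: "C = P' \<union> R'" by blast
  from \<open>hop_step C C'\<close> obtain i j where "hop (P' \<union> R') i j C'"
    unfolding C hop_step_def by blast
  moreover have "apart P' R'"
    using confined_apart confined_rtranclp P' R' assms(2-4) by blast
  ultimately consider P'' where "hop P' i j P''" "C' = P'' \<union> R'"
    | R'' where "hop R' i j R''" "C' = P' \<union> R''"
    using hop_Un_cases by blast
  then show ?case
    using P' R' by cases (metis hop_stepI rtranclp.rtrancl_into_rtrancl)+
qed blast

lemma confined_Un:
  assumes "confined P S" "confined R T" "apart S T"
  shows "confined (P \<union> R) (S \<union> T)"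
  unfolding confined_def
proof (intro allI impI)
  fix C assume "hop_step\<^sup>*\<^sup>* (P \<union> R) C"
  then obtain P' R' where "hop_step\<^sup>*\<^sup>* P P'" "hop_step\<^sup>*\<^sup>* R R'" "C = P' \<union> R'"
    using rtranclp_hop_step_Un assms by blast
  then show "C \<subseteq> S \<union> T"
    using assms(1,2) unfolding confined_def by blast
qed

lemma hop_Un_confined:
  assumes "hop P i j P'" "confined P S" "confined R T" "apart S T"
  shows "hop (P \<union> R) i j (P' \<union> R)"
proof (rule hop_Un[OF assms(1)])
  show "P \<inter> R = {}" "P' \<inter> R = {}"
    using assms confined_hop confined_apart apart_disjoint by meson+
qed

lemma multihop_Un:
  assumes "multihop P i P'" "confined P S" "confined R T" "apart S T"
  shows "multihop (P \<union> R) i (P' \<union> R)"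
  using assms(1,2)
proof (induction rule: multihop.induct)
  case (one P i j P')
  then show ?case
    using hop_Un_confined assms(3,4) multihop.one by blast
next
  case (more P i j Q P')
  then have "hop (P \<union> R) i j (Q \<union> R)" "multihop (Q \<union> R) j (P' \<union> R)"
    using hop_Un_confined assms(3,4) confined_hop by blast+
  then show ?case
    by (rule multihop.more)
qed

lemma multihop_Un_cases:
  assumes "multihop (P \<union> R) i C" "confined P S" "confined R T" "apart S T"
  shows "(\<exists>P'. multihop P i P' \<and> C = P' \<union> R) \<or> (\<exists>R'. multihop R i R' \<and> C = P \<union> R')"
  using assms(1-3)
proof (induction "P \<union> R" i C arbitrary: P R rule: multihop.induct)
  case (one i j C)
  then show ?case
    using hop_Un_cases confined_apart assms(4) multihop.one by metis
next
  case (more i j C1 C)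
  have "apart P R"
    using confined_apart more.prems assms(4) by blast
  with more.hyps(1) consider P1 where "hop P i j P1" "C1 = P1 \<union> R"
    | R1 where "hop R i j R1" "C1 = P \<union> R1"
    using hop_Un_cases by blast
  then show ?case
  proof cases
    case 1
    \<comment> \<open>the peg lands in P1, which stays apart from R, so no peg of R can continue\<close>
    have "confined P1 S"
      using confined_hop more.prems(1) 1(1) .
    moreover have "j \<notin> R"
      using confined_apart[OF \<open>confined P1 S\<close> more.prems(2) assms(4)] hop_mem[OF 1(1)]
        apart_disjoint by blast
    ultimately show ?thesis
      using more.hyps(3)[OF 1(2)] more.prems(2) 1(1) multihop_start multihop.more by metis
  next
    case 2
    have "confined R1 T"
      using confined_hop more.prems(2) 2(1) .
    moreover have "j \<notin> P"
      using confined_apart[OF more.prems(1) \<open>confined R1 T\<close> assms(4)] hop_mem[OF 2(1)]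
        apart_disjoint by blast
    ultimately show ?thesis
      using more.hyps(3)[OF 2(2)] more.prems(1) 2(1) multihop_start multihop.more by metis
  qed
qed

lemma moves_Un:
  assumes "confined P S" "confined R T" "apart S T"
  shows "moves v (P \<union> R) = (\<lambda>P'. P' \<union> R) ` moves v P \<union> (\<lambda>R'. P \<union> R') ` moves v R"
proof -
  have RP: "confined R T" "confined P S" "apart T S"
    using assms apart_commute by auto
  have "apart P R"
    using confined_apart assms by blast
  show ?thesis
  proof (cases v)
    case SingleHop
    have "hop (P \<union> R) i j (P \<union> R')" if "hop R i j R'" for i j R'
      using hop_Un_confined[OF that RP] by (simp add: Un_commute)
    then show ?thesis
      using hop_Un_cases[OF _ \<open>apart P R\<close>] hop_Un_confined[OF _ assms]
      unfolding moves_def SingleHop by fastforce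
  next
    case MultiHop
    have "multihop (P \<union> R) i (P \<union> R')" if "multihop R i R'" for i R'
      using multihop_Un[OF that RP] by (simp add: Un_commute)
    then show ?thesis
      using multihop_Un_cases[OF _ assms] multihop_Un[OF _ assms]
      unfolding moves_def MultiHop by fastforce
  qed
qed

lemma grundy_Un:
  assumes "finite P" "finite R" "confined P S" "confined R T" "apart S T"
  shows "grundy v (P \<union> R) = grundy v P XOR grundy v R"
  using assms
proof (induction "card P + card R" arbitrary: P R rule: less_induct)
  case less
  have left: "grundy v (P' \<union> R) = grundy v P' XOR grundy v R" if "P' \<in> moves v P" for P'
  proof (rule less.hyps)
    show "card P' + card R < card P + card R" "finite P'"
      using moves_finite_card[OF that \<open>finite P\<close>] by auto
    show "confined P' S"
      using confined_tranclp[OF \<open>confined P S\<close> moves_tranclp[OF that]] .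
  qed (use less.prems in auto)
  have right: "grundy v (P \<union> R') = grundy v P XOR grundy v R'" if "R' \<in> moves v R" for R'
  proof (rule less.hyps)
    show "card P + card R' < card P + card R" "finite R'"
      using moves_finite_card[OF that \<open>finite R\<close>] by auto
    show "confined R' T"
      using confined_tranclp[OF \<open>confined R T\<close> moves_tranclp[OF that]] .
  qed (use less.prems in auto)
  have "grundy v (P \<union> R) = mex (grundy v ` moves v (P \<union> R))"
    using less.prems by (simp add: grundy_eq_mex)
  also have "\<dots> = mex ((\<lambda>g. g XOR grundy v R) ` grundy v ` moves v P
      \<union> (\<lambda>g. grundy v P XOR g) ` grundy v ` moves v R)"
    unfolding moves_Un[OF less.prems(3-5)] image_Un image_image using left right
    by (simp cong: image_cong)
  also have "\<dots> = grundy v P XOR grundy v R"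
    unfolding grundy_eq_mex[OF \<open>finite P\<close>, of v] grundy_eq_mex[OF \<open>finite R\<close>, of v]
    by (intro mex_xor finite_grundy_moves less.prems)
  finally show ?case .
qed

definition isolated :: "position \<Rightarrow> bool" where
  "isolated P \<longleftrightarrow> (\<forall>i\<in>P. i + 1 \<notin> P)"

lemma isolated_no_hop: "isolated P \<Longrightarrow> \<not> hop P i j Q"
  unfolding isolated_def hop_def by (auto simp: algebra_simps)

lemma isolated_confined:
  assumes "isolated P"
  shows "confined P P"
proof -
  have "Q = P" if "hop_step\<^sup>*\<^sup>* P Q" for Q
    using that by (cases rule: converse_rtranclpE) (auto simp: hop_step_def isolated_no_hop[OF assms])
  then show ?thesis
    unfolding confined_def by blast
qed

lemma isolated_grundy: "finite P \<Longrightarrow> isolated P \<Longrightarrow> grundy v P = 0"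
proof -
  assume "finite P" "isolated P"
  then have "moves v P = {}"
    using moves_tranclp isolated_no_hop by (fastforce dest: tranclpD simp: hop_step_def)
  then show ?thesis
    using grundy_eq_mex[OF \<open>finite P\<close>] by simp
qed

section \<open>Confinement by a pagoda function\<close>

definition inv_golden :: real where
  "inv_golden = (sqrt 5 - 1) / 2"

lemma inv_golden_pos: "0 < inv_golden"
  and inv_golden_less_1: "inv_golden < 1"
  and inv_golden_square: "inv_golden\<^sup>2 + inv_golden = 1"
proof -
  have "sqrt 5 < 3"
    using real_sqrt_less_mono[of 5 9] by simp
  then show "0 < inv_golden" "inv_golden < 1"
    unfolding inv_golden_def by simp_all
  show "inv_golden\<^sup>2 + inv_golden = 1"
    unfolding inv_golden_def by (simp add: power2_eq_square field_simps)
qed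

text \<open>The weight of a peg at site i is inv_golden raised to its distance from the target
  site c, measured from the left for e = 1 and from the right for e = -1; pegs beyond c get
  negative exponents.\<close>

definition pagoda :: "int \<Rightarrow> int \<Rightarrow> position \<Rightarrow> real" where
  "pagoda e c P = (\<Sum>i\<in>P. inv_golden powi (e * (c - i)))"

lemma inv_golden_powi_hop:
  assumes "t = 1 \<or> t = -1"
  shows "inv_golden powi (a - 2 * t) \<le> inv_golden powi a + inv_golden powi (a - t)"
  using assms
proof
  assume "t = 1"
  have "inv_golden powi a + inv_golden powi (a - 1)
      = inv_golden powi (a - 2) * (inv_golden\<^sup>2 + inv_golden)"
    using inv_golden_pos
    by (simp add: distrib_left power_int_diff power2_eq_square field_simps)
  with \<open>t = 1\<close> show ?thesis
    by (simp add: inv_golden_square)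
next
  assume "t = -1"
  have "inv_golden powi (a + 2) \<le> inv_golden powi a"
    using inv_golden_pos inv_golden_less_1 by (intro power_int_decreasing) auto
  moreover have "0 \<le> inv_golden powi (a + 1)"
    using inv_golden_pos by simp
  ultimately show ?thesis
    using \<open>t = -1\<close> by simp
qed

lemma inv_golden_power_sum_less:
  assumes "finite I" "0 \<notin> I"
  shows "(\<Sum>n\<in>I. inv_golden ^ n) < 1 / inv_golden"
proof -
  define N where "N = Max (insert 0 I)"
  have le: "(\<Sum>n\<in>I. inv_golden ^ n) \<le> (\<Sum>n=1..N. inv_golden ^ n)"
    using assms inv_golden_pos unfolding N_def
    by (intro sum_mono2) (auto simp: Suc_le_eq gr0I, metis gr0I)
  have "inv_golden * (inv_golden * (\<Sum>n=1..N. inv_golden ^ n)) < inv_golden * 1"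
  proof (cases "N = 0")
    case False
    have "inv_golden\<^sup>2 * (\<Sum>n=1..N. inv_golden ^ n) = inv_golden - inv_golden ^ Suc N"
      using sum_gp_multiplied[of 1 N inv_golden] inv_golden_square False
      by (simp add: eq_diff_eq[symmetric])
    then show ?thesis
      using inv_golden_pos by (simp add: power2_eq_square mult.assoc)
  qed (simp add: inv_golden_pos)
  then have "inv_golden * (\<Sum>n=1..N. inv_golden ^ n) < 1"
    using inv_golden_pos by (simp only: mult_less_cancel_left_pos)
  then have "inv_golden * (\<Sum>n\<in>I. inv_golden ^ n) < 1"
    using mult_left_mono[OF le, of inv_golden] inv_golden_pos by linarith
  then show ?thesis
    using inv_golden_pos by (simp add: pos_less_divide_eq mult.commute)
qed

lemma pagoda_less:
  assumes "finite P" "\<forall>i\<in>P. 0 < e * (c - i)" "e = 1 \<or> e = -1"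
  shows "pagoda e c P < 1 / inv_golden"
proof -
  define g where "g i = nat (e * (c - i))" for i
  have "inj_on g P"
    using assms(2,3) unfolding g_def by (auto intro!: inj_onI)
  have "pagoda e c P = (\<Sum>i\<in>P. inv_golden ^ g i)"
    unfolding pagoda_def g_def using assms(2)
    by (intro sum.cong refl) (simp add: power_int_def less_imp_le)
  also have "\<dots> = (\<Sum>n\<in>g ` P. inv_golden ^ n)"
    using sum.reindex[OF \<open>inj_on g P\<close>, of "\<lambda>n. inv_golden ^ n"] by simp
  also have "\<dots> < 1 / inv_golden"
    using assms(1,2) unfolding g_def by (intro inv_golden_power_sum_less) auto
  finally show ?thesis .
qed

lemma pagoda_ge:
  assumes "finite P" "i \<in> P" "e * (c - i) < 0"
  shows "1 / inv_golden \<le> pagoda e c P"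
proof -
  have "1 / inv_golden = inv_golden powi (-1)"
    by (simp add: power_int_minus divide_inverse)
  also have "\<dots> \<le> inv_golden powi (e * (c - i))"
    using assms(3) inv_golden_pos inv_golden_less_1 by (intro power_int_decreasing) auto
  also have "\<dots> \<le> pagoda e c P"
    unfolding pagoda_def using assms(1,2) inv_golden_pos by (intro member_le_sum) auto
  finally show ?thesis .
qed

lemma pagoda_hop:
  assumes "hop P i j Q" "finite P" "e = 1 \<or> e = -1"
  shows "pagoda e c Q \<le> pagoda e c P"
proof -
  obtain d where d: "d = 1 \<or> d = -1" "i \<in> P" "i + d \<in> P" "i + 2*d \<notin> P"
    and Q: "Q = insert (i + 2*d) (P - {i, i + d})"
    using assms(1) unfolding hop_def by auto
  define w where "w k = inv_golden powi (e * (c - k))" for k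
  define R where "R = P - {i, i + d}"
  have "finite R" "i \<notin> R" "i + d \<notin> R" "i + 2*d \<notin> R" "i \<noteq> i + d"
    using assms(2) d unfolding R_def by auto
  moreover have "P = insert i (insert (i + d) R)"
    using d unfolding R_def by auto
  ultimately have "pagoda e c P = w i + w (i + d) + sum w R"
    and "pagoda e c Q = w (i + 2*d) + sum w R"
    unfolding pagoda_def w_def[symmetric] Q R_def[symmetric] by simp_all
  moreover have "w (i + 2*d) \<le> w i + w (i + d)"
    using inv_golden_powi_hop[of "e * d" "e * (c - i)"] assms(3) d(1)
    unfolding w_def by (auto simp: algebra_simps)
  ultimately show ?thesis
    by simp
qed

lemma pagoda_rtranclp:
  assumes "hop_step\<^sup>*\<^sup>* P Q" "finite P" "e = 1 \<or> e = -1"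
  shows "finite Q \<and> pagoda e c Q \<le> pagoda e c P"
  using assms(1)
proof (induction rule: rtranclp_induct)
  case (step Q Q')
  then obtain i j where "hop Q i j Q'"
    unfolding hop_step_def by blast
  with step.IH show ?case
    using hop_finite_card pagoda_hop[OF _ _ assms(3)] by (meson order_trans)
qed (use assms(2) in simp)

lemma confined_pagoda:
  assumes "finite P" "\<forall>i\<in>P. 0 < e * (c - i)" "e = 1 \<or> e = -1"
  shows "confined P {i. 0 \<le> e * (c - i)}"
  unfolding confined_def
proof (intro allI impI subsetI CollectI)
  fix Q i assume "hop_step\<^sup>*\<^sup>* P Q" "i \<in> Q"
  obtain "finite Q" "pagoda e c Q \<le> pagoda e c P"
    using pagoda_rtranclp[OF \<open>hop_step\<^sup>*\<^sup>* P Q\<close> assms(1,3)] by blast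
  show "0 \<le> e * (c - i)"
  proof (rule ccontr)
    assume "\<not> 0 \<le> e * (c - i)"
    then have "1 / inv_golden \<le> pagoda e c Q"
      by (intro pagoda_ge[OF \<open>finite Q\<close> \<open>i \<in> Q\<close>]) simp
    moreover have "pagoda e c P < 1 / inv_golden"
      by (rule pagoda_less[OF assms])
    ultimately show False
      using \<open>pagoda e c Q \<le> pagoda e c P\<close> by linarith
  qed
qed

lemma confined_left:
  assumes "finite P" "P \<subseteq> {..<c}"
  shows "confined P {..c}"
proof -
  have "confined P {i. 0 \<le> 1 * (c - i)}"
    by (rule confined_pagoda) (use assms in auto)
  moreover have "{i. 0 \<le> 1 * (c - i)} = {..c}"
    by auto
  ultimately show ?thesis
    by simp
qed

lemma confined_right:
  assumes "finite P" "P \<subseteq> {c<..}"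
  shows "confined P {c..}"
proof -
  have "confined P {i. 0 \<le> -1 * (c - i)}"
    by (rule confined_pagoda) (use assms in auto)
  moreover have "{i. 0 \<le> -1 * (c - i)} = {c..}"
    by auto
  ultimately show ?thesis
    by simp
qed

lemma grundy_Un_isolated_middle:
  assumes "finite A" "finite M" "finite B" "isolated M" "c + 2 \<le> d"
    and "A \<subseteq> {..<c}" "M \<subseteq> {c + 2..d - 2}" "B \<subseteq> {d<..}"
  shows "grundy v (A \<union> M \<union> B) = grundy v A XOR grundy v B"
proof -
  have A: "confined A {..c}" and M: "confined M M" and B: "confined B {d..}"
    using assms by (simp_all add: confined_left isolated_confined confined_right)
  have apart_AM: "apart {..c} M" and apart_AM_B: "apart ({..c} \<union> M) {d..}"
    using assms(5,7) unfolding apart_def by fastforce+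
  have "grundy v (A \<union> M \<union> B) = grundy v (A \<union> M) XOR grundy v B"
    using grundy_Un confined_Un[OF A M apart_AM] B apart_AM_B assms(1-3) by blast
  also have "grundy v (A \<union> M) = grundy v A XOR grundy v M"
    using grundy_Un A M apart_AM assms(1,2) by blast
  also have "grundy v M = 0"
    using isolated_grundy assms(2,4) by blast
  finally show ?thesis
    by simp
qed

lemma word_pos_Nil [simp]: "word_pos [] = {}"
  unfolding word_pos_def by simp

lemma word_pos_Cons [simp]: "word_pos (b # w) = (if b then {0} else {}) \<union> shift 1 (word_pos w)"
proof (intro equalityI subsetI)
  fix x assume "x \<in> word_pos (b # w)"
  then obtain i where "x = int i" "i < Suc (length w)" "(b # w) ! i"
    unfolding word_pos_def by auto
  then show "x \<in> (if b then {0} else {}) \<union> shift 1 (word_pos w)"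
    by (cases i) (auto simp: word_pos_def shift_def)
next
  fix x assume "x \<in> (if b then {0} else {}) \<union> shift 1 (word_pos w)"
  then consider "b" "x = 0" | i where "x = int (Suc i)" "i < length w" "w ! i"
    unfolding word_pos_def shift_def by (auto split: if_splits)
  then show "x \<in> word_pos (b # w)"
    unfolding word_pos_def by cases force+
qed

lemma word_pos_append: "word_pos (u @ w) = word_pos u \<union> shift (int (length u)) (word_pos w)"
  by (induction u) (auto simp: algebra_simps)

lemma word_pos_subset: "word_pos w \<subseteq> {0..<int (length w)}"
  unfolding word_pos_def by auto

lemma finite_word_pos: "finite (word_pos w)"
  using word_pos_subset finite_subset by blast

lemma word_pos_replicate_hole_peg:
  "word_pos (concat (replicate m [False, True])) = (\<lambda>k. 2 * int k + 1) ` {..<m}"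
proof (induction m)
  case (Suc m)
  have "word_pos (concat (replicate (Suc m) [False, True]))
      = insert 1 (shift 2 ((\<lambda>k. 2 * int k + 1) ` {..<m}))"
    using Suc.IH by (simp add: word_pos_append)
  also have "\<dots> = (\<lambda>k. 2 * int k + 1) ` {..<Suc m}"
    unfolding lessThan_Suc_eq_insert_0 shift_def image_insert image_image by (simp add: algebra_simps)
  finally show ?case .
qed simp

lemma word_pos_split_at_holes:
  "word_pos (x @ [False] @ concat (replicate m [False, True]) @ [False, False] @ y)
    = word_pos (x @ [False]) \<union> (\<lambda>k. int (length x) + 2 * int k + 2) ` {..<m}
      \<union> shift (int (length x) + 2 * int m + 2) (word_pos (False # y))"
  by (simp add: word_pos_append word_pos_replicate_hole_peg shift_def image_image image_Un
      length_concat sum_list_replicate algebra_simps Un_assoc)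

theorem lemma1:
  fixes v :: version and x y :: "bool list" and m :: nat
  shows "G v (x @ [False] @ concat (replicate m [False, True]) @ [False, False] @ y)
         = xor (G v (x @ [False])) (G v (False # y))"
proof -
  define n where "n = int (length x)"
  define M where "M = (\<lambda>k. n + 2 * int k + 2) ` {..<m}"
  have "word_pos (x @ [False]) \<subseteq> {..<n}"
    using word_pos_subset[of x] unfolding n_def by (auto simp: word_pos_append)
  moreover have "shift (n + 2 * int m + 2) (word_pos (False # y)) \<subseteq> {n + 2 * int m + 2<..}"
    using word_pos_subset[of y] by (auto simp: mem_shift_iff)
  moreover have "isolated M" "M \<subseteq> {n + 2..n + 2 * int m}"
    unfolding isolated_def M_def by (auto simp: algebra_simps) presburger
  ultimately show ?thesis
    using grundy_Un_isolated_middle[of _ M _ n "n + 2 * int m + 2" v]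
    unfolding G_def word_pos_split_at_holes n_def[symmetric] M_def[symmetric]
    by (simp add: finite_word_pos M_def)
qed

end
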